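(* Let $H\in\mathbb{C}^{N\times N}$ be an orthogonal projector, $|\psi_0\rangle$ a unit vector, $\psi_0=|\psi_0\rangle\langle\psi_0|$, $X_0:=[H,\psi_0]$, $Y_0:=i[H,X_0]$, $\mathcal{W}:=\operatorname{span}_{\mathbb{R}}\{X_0,Y_0\}$, and $c_0:=\|X_0\|_F$, assumed positive. For $U\in\mathrm{U}(N)$ and $\eta=(xX_0+yY_0)U\in\mathcal{W}U$ with $x,y\in\mathbb{R}$, define \[\mathrm{R}_U(\eta)=e^{ia_1H}e^{ib_1\psi_0}e^{i(a_2-a_1)H}e^{ib_2\psi_0}e^{-ia_2H}\,U,\] where $A=\operatorname{atan2}(y,x)$, $R=\sqrt{x^2+y^2}$, $a_1=A+\tfrac{\pi}{2}$, $a_2=A-\tfrac{\pi}{2}$, $b_1=-\tfrac R2$, $b_2=\tfrac R2$. Then for all $U\in\mathrm{U}(N)$ and $\eta\in\mathcal{W}U$, \[\|\mathrm{R}_U(\eta)-U\|_F\le\|\eta\|_F,\qquad \|\mathrm{R}_U(\eta)-U-\eta\|_F\le\frac{1}{4c_0}\|\eta\|_F^2 .\] Moreover, both bounds are tight: as $\eta\to0$ (with $\eta\ne0$), $\dfrac{\|\mathrm{R}_U(\eta)-U\|_F}{\|\eta\|_F}\to1$ and $\dfrac{\|\mathrm{R}_U(\eta)-U-\eta\|_F}{\|\eta\|_F^2}\to\dfrac{1}{4c_0}$.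
   Context: $\|\cdot\|_F$ is the Frobenius norm, $[A,B]=AB-BA$, $\mathrm{U}(N)$ is the unitary group, and $\operatorname{atan2}$ is the two-argument arctangent. When $c_0>0$, $X_0$ and $Y_0$ are linearly independent over $\mathbb{R}$, so $(x,y)$ is uniquely determined by $\eta$. *)

theory Defs
  imports "HOL-Analysis.Analysis"
begin

type_synonym 'n cmat = "complex ^'n ^'n"

definition adj :: "'n::finite cmat \<Rightarrow> 'n cmat" where
  "adj A = (\<chi> i j. cnj (A $ j $ i))"

definition cscale :: "complex \<Rightarrow> 'n::finite cmat \<Rightarrow> 'n cmat" where
  "cscale c A = (\<chi> i j. c * A $ i $ j)"

primrec mpow :: "'n::finite cmat \<Rightarrow> nat \<Rightarrow> 'n cmat" where
  "mpow A 0 = mat 1"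
| "mpow A (Suc k) = A ** mpow A k"

definition mexp :: "'n::finite cmat \<Rightarrow> 'n cmat" where
  "mexp A = (\<Sum>k. cscale (1 / of_nat (fact k)) (mpow A k))"

definition frob :: "'n::finite cmat \<Rightarrow> real" where
  "frob A = sqrt (\<Sum>i\<in>UNIV. \<Sum>j\<in>UNIV. (cmod (A $ i $ j))\<^sup>2)"

definition comm :: "'n::finite cmat \<Rightarrow> 'n cmat \<Rightarrow> 'n cmat" where
  "comm A B = A ** B - B ** A"

definition unitary :: "'n::finite cmat \<Rightarrow> bool" where
  "unitary U \<longleftrightarrow> adj U ** U = mat 1 \<and> U ** adj U = mat 1"

definition orth_proj :: "'n::finite cmat \<Rightarrow> bool" where
  "orth_proj H \<longleftrightarrow> H ** H = H \<and> adj H = H"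

definition unit_vec :: "complex ^'n::finite \<Rightarrow> bool" where
  "unit_vec v \<longleftrightarrow> (\<Sum>i\<in>UNIV. (cmod (v $ i))\<^sup>2) = 1"

definition ket_bra :: "complex ^'n::finite \<Rightarrow> 'n cmat" where
  "ket_bra v = (\<chi> i j. v $ i * cnj (v $ j))"

text \<open>atan2(y,x): the argument of x + iy in (-pi,pi]; atan2(0,0)=0.\<close>
definition atan2 :: "real \<Rightarrow> real \<Rightarrow> real" where
  "atan2 y x = Arg (Complex x y)"

definition X0 :: "'n::finite cmat \<Rightarrow> complex ^'n \<Rightarrow> 'n cmat" where
  "X0 H v = comm H (ket_bra v)"

definition Y0 :: "'n::finite cmat \<Rightarrow> complex ^'n \<Rightarrow> 'n cmat" where
  "Y0 H v = cscale \<i> (comm H (X0 H v))"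

definition Wcomb :: "'n::finite cmat \<Rightarrow> complex ^'n \<Rightarrow> real \<Rightarrow> real \<Rightarrow> 'n cmat" where
  "Wcomb H v x y = cscale (complex_of_real x) (X0 H v) + cscale (complex_of_real y) (Y0 H v)"

definition WU :: "'n::finite cmat \<Rightarrow> complex ^'n \<Rightarrow> 'n cmat \<Rightarrow> 'n cmat set" where
  "WU H v U = {Wcomb H v x y ** U | x y. True}"

definition Rxy :: "'n::finite cmat \<Rightarrow> complex ^'n \<Rightarrow> 'n cmat \<Rightarrow> real \<Rightarrow> real \<Rightarrow> 'n cmat" where
  "Rxy H v U x y =
    (let A = atan2 y x; R = sqrt (x\<^sup>2 + y\<^sup>2);
         a1 = A + pi / 2; a2 = A - pi / 2; b1 = - R / 2; b2 = R / 2;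
         P = ket_bra v
     in mexp (cscale (\<i> * a1) H) ** mexp (cscale (\<i> * b1) P) **
        mexp (cscale (\<i> * (a2 - a1)) H) ** mexp (cscale (\<i> * b2) P) **
        mexp (cscale (- \<i> * a2) H) ** U)"

text \<open>The retraction R_U(eta) for eta in W U: (x,y) is the unique coordinate pair
  (unique when c0 > 0).\<close>
definition Rret :: "'n::finite cmat \<Rightarrow> complex ^'n \<Rightarrow> 'n cmat \<Rightarrow> 'n cmat \<Rightarrow> 'n cmat" where
  "Rret H v U \<eta> = (let (x, y) = (THE (x, y). \<eta> = Wcomb H v x y ** U) in Rxy H v U x y)"

end

theory Submission
  imports Defs "HOL-Probability.Characteristic_Functions" "HOL-Real_Asymp.Real_Asymp"
begin

text \<open>
  Write P = |v><v| and a = |Hv|^2. Since PHP = aP, the matrices 1, H, P, HP, PH, HPH span an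
  algebra containing every matrix of the statement, and on the span of P, HP, PH, HPH the squared
  Frobenius norm is an explicit quadratic form in the coefficients. Conjugation by the unitary
  exp(i\<phi>H) rotates the plane spanned by X0 and Y0 by the angle \<phi>, so conjugating by exp(i a1 H)
  turns the retraction into the core product exp(-i\<theta>P) exp(-i\<pi>H) exp(i\<theta>P) exp(i\<pi>H) and \<eta>
  into -2\<theta> Y0, where \<theta> = R/2 = |\<eta>|/(2 c0). Multiplying out in the algebra gives
  |R(\<eta>) - U| = 2 c0 |e^(i\<theta>) - 1| and |R(\<eta>) - U - \<eta>| = 2 c0 |e^(i\<theta>) - 1 - i\<theta>|, so both
  bounds and their sharpness reduce to |e^(it) - 1| \<le> t and |e^(it) - 1 - it| \<le> t^2/2 and to the
  behaviour of these two quantities as t \<rightarrow> 0.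
\<close>

lemma cscale_mult_left [simp]: "cscale c A ** B = cscale c (A ** B)"
  by (simp add: cscale_def matrix_matrix_mult_def vec_eq_iff sum_distrib_left mult.assoc)

lemma cscale_mult_right [simp]: "A ** cscale c B = cscale c (A ** B)"
  by (simp add: cscale_def matrix_matrix_mult_def vec_eq_iff sum_distrib_left mult.left_commute)

lemma cscale_cscale [simp]: "cscale c (cscale d A) = cscale (c * d) A"
  by (simp add: cscale_def vec_eq_iff mult.assoc)

lemma cscale_add_left: "cscale (c + d) A = cscale c A + cscale d A"
  by (simp add: cscale_def vec_eq_iff distrib_right)

lemma cscale_add_right: "cscale c (A + B) = cscale c A + cscale c B"
  by (simp add: cscale_def vec_eq_iff distrib_left)

lemma cscale_one [simp]: "cscale 1 A = A"
  by (simp add: cscale_def vec_eq_iff)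

lemma cscale_zero_left [simp]: "cscale 0 A = 0"
  by (simp add: cscale_def vec_eq_iff)

lemma matrix_add_rdistrib: "(B + C) ** A = B ** A + C ** A"
  by (simp add: matrix_matrix_mult_def vec_eq_iff sum.distrib distrib_right)

lemma matrix_diff_ldistrib:
  fixes A :: "'a::ring_1 ^'n::finite ^'m" and B C :: "'a ^'p ^'n"
  shows "A ** (B - C) = A ** B - A ** C"
  by (simp add: matrix_matrix_mult_def vec_eq_iff right_diff_distrib sum_subtractf)

lemma matrix_diff_rdistrib:
  fixes A :: "'a::ring_1 ^'p ^'n::finite" and B C :: "'a ^'n ^'m"
  shows "(B - C) ** A = B ** A - C ** A"
  by (simp add: matrix_matrix_mult_def vec_eq_iff left_diff_distrib sum_subtractf)

lemma adj_mult: "adj (A ** B) = adj B ** adj A"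
  by (simp add: adj_def matrix_matrix_mult_def vec_eq_iff mult.commute)

lemma adj_adj [simp]: "adj (adj A) = A"
  by (simp add: adj_def vec_eq_iff)

lemma adj_add: "adj (A + B) = adj A + adj B"
  by (simp add: adj_def vec_eq_iff)

lemma adj_cscale: "adj (cscale c A) = cscale (cnj c) (adj A)"
  by (simp add: adj_def cscale_def vec_eq_iff)

lemma adj_mat_1 [simp]: "adj (mat 1) = mat 1"
  by (simp add: adj_def mat_def vec_eq_iff)

lemma unitary_adj: "unitary U \<Longrightarrow> unitary (adj U)"
  by (simp add: unitary_def)

lemma mpow_cscale_idem:
  assumes "Q ** Q = Q"
  shows "mpow (cscale c Q) (Suc k) = cscale (c ^ Suc k) Q"
  by (induction k) (simp_all add: assms mult_ac)

lemma bounded_linear_cscale_left: "bounded_linear (\<lambda>c. cscale c Q)"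
proof -
  have "linear (\<lambda>c. cscale c Q)"
    by (rule linearI) (simp_all add: cscale_add_left, simp add: cscale_def vec_eq_iff)
  then show ?thesis
    by (simp add: linear_conv_bounded_linear)
qed

lemma mexp_cscale_idem:
  assumes Q: "Q ** Q = Q"
  shows "mexp (cscale c Q) = mat 1 + cscale (exp c - 1) Q"
proof -
  have term_eq: "cscale (1 / of_nat (fact k)) (mpow (cscale c Q) k) =
      (if k = 0 then mat 1 - Q else 0) + cscale (c ^ k / of_nat (fact k)) Q" for k
  proof (cases k)
    case (Suc j)
    then show ?thesis
      using mpow_cscale_idem[OF Q, of c j] by simp
  qed simp
  have "(\<lambda>k. if k = 0 then mat 1 - Q else 0) sums (mat 1 - Q)"
    using sums_single[of 0 "\<lambda>_. mat 1 - Q"] by simp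
  moreover have "(\<lambda>k. cscale (c ^ k / of_nat (fact k)) Q) sums cscale (exp c) Q"
    using bounded_linear.sums[OF bounded_linear_cscale_left exp_converges[of c]]
    by (simp add: scaleR_conv_of_real divide_inverse mult.commute)
  ultimately have "(\<lambda>k. cscale (1 / of_nat (fact k)) (mpow (cscale c Q) k))
      sums (mat 1 - Q + cscale (exp c) Q)"
    unfolding term_eq by (rule sums_add)
  then have "mexp (cscale c Q) = mat 1 - Q + cscale (exp c) Q"
    unfolding mexp_def by (rule sums_unique[symmetric])
  then show ?thesis
    by (simp add: cscale_def vec_eq_iff algebra_simps)
qed

lemma mexp_cscale_idem_add:
  assumes Q: "Q ** Q = Q"
  shows "mexp (cscale c Q) ** mexp (cscale d Q) = mexp (cscale (c + d) Q)"
proof -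
  define \<alpha> \<beta> where "\<alpha> = exp c - 1" and "\<beta> = exp d - 1"
  have "mexp (cscale c Q) ** mexp (cscale d Q) = mat 1 + cscale \<alpha> Q + cscale \<beta> Q + cscale (\<alpha> * \<beta>) Q"
    unfolding mexp_cscale_idem[OF Q] \<alpha>_def[symmetric] \<beta>_def[symmetric]
    by (simp add: matrix_add_ldistrib matrix_add_rdistrib cscale_add_right Q add_ac mult.commute)
  also have "\<dots> = mat 1 + cscale (\<alpha> + \<beta> + \<alpha> * \<beta>) Q"
    by (simp add: cscale_add_left add_ac)
  also have "\<alpha> + \<beta> + \<alpha> * \<beta> = exp (c + d) - 1"
    by (simp add: \<alpha>_def \<beta>_def exp_add algebra_simps)
  finally show ?thesis
    by (simp add: mexp_cscale_idem[OF Q])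
qed

lemma adj_mexp_cscale:
  assumes "orth_proj Q"
  shows "adj (mexp (cscale c Q)) = mexp (cscale (cnj c) Q)"
  using assms by (simp add: orth_proj_def mexp_cscale_idem adj_add adj_cscale exp_cnj)

lemma unitary_mexp_imag:
  assumes Q: "orth_proj Q"
  shows "unitary (mexp (cscale (\<i> * complex_of_real t) Q))"
proof -
  have idem: "Q ** Q = Q"
    using Q by (simp add: orth_proj_def)
  show ?thesis
    unfolding unitary_def adj_mexp_cscale[OF Q] mexp_cscale_idem_add[OF idem]
    using mexp_cscale_idem[OF idem, of 0] by simp
qed

lemma frob_eq_norm: "frob A = norm A"
  unfolding frob_def norm_vec_def L2_set_def by (simp add: sum_nonneg)

lemma frob_adj: "frob (adj A) = frob A"
  unfolding frob_def adj_def by (simp, subst sum.swap, simp)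

lemma cmod_sq_eq_mult_cnj: "(complex_of_real (cmod z))\<^sup>2 = z * cnj z"
  using complex_norm_square[of z] by simp

lemma frob_mult_unitary_right:
  assumes "unitary U"
  shows "frob (A ** U) = frob A"
proof -
  have UU: "U ** adj U = mat 1"
    using assms by (simp add: unitary_def)
  have orth: "(\<Sum>j\<in>UNIV. U $ k $ j * cnj (U $ l $ j)) = (if k = l then 1 else 0)" for k l
    using arg_cong[OF UU, of "\<lambda>M. M $ k $ l"] by (simp add: matrix_matrix_mult_def adj_def mat_def)
  have row: "(\<Sum>j\<in>UNIV. (cmod (\<Sum>k\<in>UNIV. a k * U $ k $ j))\<^sup>2) = (\<Sum>k\<in>UNIV. (cmod (a k))\<^sup>2)"
    for a :: "'a \<Rightarrow> complex"
  proof -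
    have "complex_of_real (\<Sum>j\<in>UNIV. (cmod (\<Sum>k\<in>UNIV. a k * U $ k $ j))\<^sup>2)
        = (\<Sum>j\<in>UNIV. \<Sum>k\<in>UNIV. \<Sum>l\<in>UNIV. a k * cnj (a l) * (U $ k $ j * cnj (U $ l $ j)))"
      by (simp add: cmod_sq_eq_mult_cnj sum_product mult_ac)
    also have "\<dots> = (\<Sum>k\<in>UNIV. \<Sum>l\<in>UNIV. a k * cnj (a l) * (\<Sum>j\<in>UNIV. U $ k $ j * cnj (U $ l $ j)))"
      by (subst sum.swap, simp add: sum_distrib_left, subst sum.swap, simp)
    also have "\<dots> = complex_of_real (\<Sum>k\<in>UNIV. (cmod (a k))\<^sup>2)"
      by (simp add: orth if_distrib if_distribR cmod_sq_eq_mult_cnj cong: if_cong)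
    finally show ?thesis
      using of_real_eq_iff by blast
  qed
  show ?thesis
    unfolding frob_def matrix_matrix_mult_def by (simp add: row)
qed

lemma frob_mult_unitary_left:
  assumes "unitary U"
  shows "frob (U ** A) = frob A"
  using frob_mult_unitary_right[OF unitary_adj[OF assms], of "adj A"]
  by (simp add: frob_adj flip: adj_mult)

lemma polar_atan2:
  "x = sqrt (x\<^sup>2 + y\<^sup>2) * cos (atan2 y x)" "y = sqrt (x\<^sup>2 + y\<^sup>2) * sin (atan2 y x)"
proof -
  have "Complex x y = rcis (sqrt (x\<^sup>2 + y\<^sup>2)) (atan2 y x)"
    using rcis_cmod_Arg[of "Complex x y"] by (simp add: atan2_def complex_norm)
  then show "x = sqrt (x\<^sup>2 + y\<^sup>2) * cos (atan2 y x)" "y = sqrt (x\<^sup>2 + y\<^sup>2) * sin (atan2 y x)"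
    by (simp_all add: complex_eq_iff)
qed

lemma iexp_sub_1: "iexp t - 1 = Complex (cos t - 1) (sin t)"
  using cis_conv_exp[of t] by (simp add: complex_eq_iff)

lemma iexp_sub_1_sub_linear: "iexp t - 1 - \<i> * t = Complex (cos t - 1) (sin t - t)"
  using cis_conv_exp[of t] by (simp add: complex_eq_iff)

lemma norm_iexp_sub_1_le: "cmod (iexp t - 1) \<le> \<bar>t\<bar>"
  using iexp_approx1[of t 0] by simp

lemma norm_iexp_sub_1_sub_linear_le: "cmod (iexp t - 1 - \<i> * t) \<le> t\<^sup>2 / 2"
  using iexp_approx1[of t 1] by (simp add: diff_diff_add numeral_2_eq_2)

lemma tendsto_norm_iexp_sub_1_div: "((\<lambda>t. cmod (iexp t - 1) / t) \<longlongrightarrow> 1) (at_right 0)"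
  unfolding iexp_sub_1 complex_norm by real_asymp

lemma tendsto_norm_iexp_sub_1_sub_linear_div:
  "((\<lambda>t. cmod (iexp t - 1 - \<i> * t) / t\<^sup>2) \<longlongrightarrow> 1 / 2) (at_right 0)"
  unfolding iexp_sub_1_sub_linear complex_norm by real_asymp

lemma filterlim_norm_div_at_right_0:
  fixes c :: real
  assumes "c > 0"
  shows "filterlim (\<lambda>x. norm x / c) (at_right 0) (at (0::'a::real_normed_vector) within S)"
  unfolding filterlim_at
proof
  show "\<forall>\<^sub>F x in at 0 within S. norm x / c \<in> {0<..} \<and> norm x / c \<noteq> 0"
    using assms by (simp add: eventually_at_filter)
  have "((\<lambda>x. norm x / c) \<longlongrightarrow> norm (0::'a) / c) (at 0 within S)"
    by (intro tendsto_intros) (use assms in simp)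
  then show "((\<lambda>x. norm x / c) \<longlongrightarrow> 0) (at 0 within S)"
    by simp
qed

lemma ket_bra_entry: "ket_bra v $ i $ j = v $ i * cnj (v $ j)"
  by (simp add: ket_bra_def)

definition hp_comb ::
    "'n::finite cmat \<Rightarrow> 'n cmat \<Rightarrow> complex \<Rightarrow> complex \<Rightarrow> complex \<Rightarrow> complex \<Rightarrow> complex \<Rightarrow> complex \<Rightarrow> 'n cmat"
  where "hp_comb H P s t c1 c2 c3 c4 = cscale s (mat 1) + cscale t H + cscale c1 P
      + cscale c2 (H ** P) + cscale c3 (P ** H) + cscale c4 (H ** P ** H)"

lemma hp_comb_cong:
  "\<lbrakk>s = s'; t = t'; c1 = d1; c2 = d2; c3 = d3; c4 = d4\<rbrakk>
    \<Longrightarrow> hp_comb H P s t c1 c2 c3 c4 = hp_comb H P s' t' d1 d2 d3 d4"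
  by simp

lemma hp_comb_diff:
  "hp_comb H P s t c1 c2 c3 c4 - hp_comb H P s' t' d1 d2 d3 d4
    = hp_comb H P (s - s') (t - t') (c1 - d1) (c2 - d2) (c3 - d3) (c4 - d4)"
  by (simp add: hp_comb_def cscale_def vec_eq_iff algebra_simps)

lemma hp_comb_mult:
  fixes H P :: "'n::finite cmat"
  assumes HH: "H ** H = H" and PP: "P ** P = P" and PHP: "P ** H ** P = cscale a P"
  shows "hp_comb H P s t c1 c2 c3 c4 ** hp_comb H P s' t' d1 d2 d3 d4 =
    hp_comb H P (s * s') (s * t' + t * s' + t * t')
      (s * d1 + c1 * s' + c1 * d1 + a * c1 * d2 + a * c3 * d1 + a * c3 * d2)
      (s * d2 + c2 * s' + t * d1 + t * d2 + c2 * d1 + a * c2 * d2 + a * c4 * d1 + a * c4 * d2)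
      (s * d3 + c3 * s' + c1 * t' + c3 * t' + c1 * d3 + a * c1 * d4 + a * c3 * d3 + a * c3 * d4)
      (s * d4 + c4 * s' + t * d3 + t * d4 + c2 * t' + c4 * t' + c2 * d3 + a * c2 * d4 + a * c4 * d3
        + a * c4 * d4)"
proof -
  have "H ** (H ** X) = H ** X" "P ** (P ** X) = P ** X" "P ** (H ** (P ** X)) = cscale a (P ** X)"
    "P ** (H ** P) = cscale a P" for X
    using HH PP PHP by (simp_all add: matrix_mul_assoc)
  then show ?thesis
    unfolding hp_comb_def
    by (simp add: matrix_add_ldistrib matrix_add_rdistrib cscale_add_left cscale_add_right
        matrix_mul_assoc[symmetric] HH PP algebra_simps)
qed

definition cinner :: "complex ^'n::finite \<Rightarrow> complex ^'n \<Rightarrow> complex" where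
  "cinner x y = (\<Sum>i\<in>UNIV. x $ i * cnj (y $ i))"

lemma frob_sq_outer_comb:
  fixes v w :: "complex ^'n::finite" and a :: real
  assumes vv: "cinner v v = 1" and vw: "cinner v w = a" and ww: "cinner w w = a"
  shows "(frob (\<chi> i j. c1 * v $ i * cnj (v $ j) + c2 * w $ i * cnj (v $ j)
                      + c3 * v $ i * cnj (w $ j) + c4 * w $ i * cnj (w $ j)))\<^sup>2
    = a\<^sup>2 * (cmod (c1 + c2 + c3 + c4))\<^sup>2 + a * (1 - a) * ((cmod (c1 + c2))\<^sup>2 + (cmod (c1 + c3))\<^sup>2)
      + (1 - a)\<^sup>2 * (cmod c1)\<^sup>2" (is "?L = ?R")
proof -
  define p q where "p = c1 *s v + c2 *s w" and "q = c3 *s v + c4 *s w"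
  have wv: "cinner w v = a"
    using arg_cong[OF vw, of cnj] unfolding cinner_def by (simp add: mult.commute)
  have lin: "cinner (b1 *s x + b2 *s y) z = b1 * cinner x z + b2 * cinner y z"
    "cinner z (b1 *s x + b2 *s y) = cnj b1 * cinner z x + cnj b2 * cinner z y"
    for b1 b2 :: complex and x y z :: "complex ^'n"
    unfolding cinner_def by (simp_all add: algebra_simps sum.distrib sum_distrib_left)
  have "complex_of_real ?L
      = (\<Sum>i\<in>UNIV. \<Sum>j\<in>UNIV. (p $ i * cnj (v $ j) + q $ i * cnj (w $ j))
                              * cnj (p $ i * cnj (v $ j) + q $ i * cnj (w $ j)))"
    unfolding frob_def p_def q_def
    by (simp add: sum_nonneg cmod_sq_eq_mult_cnj algebra_simps)
  also have "\<dots> = cinner p p * cinner v v + cinner p q * cinner w v + cinner q p * cinner v w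
      + cinner q q * cinner w w"
    unfolding cinner_def by (simp add: algebra_simps sum.distrib sum_product)
  also have "\<dots> = complex_of_real ?R"
    unfolding p_def q_def lin vv vw ww wv
    by (simp only: of_real_add of_real_mult of_real_power of_real_diff of_real_1 cmod_sq_eq_mult_cnj)
      (simp add: algebra_simps power2_eq_square)
  finally show ?thesis
    using of_real_eq_iff by blast
qed

lemma cinner_mult_left: "cinner (A *v x) y = cinner x (adj A *v y)"
  unfolding cinner_def matrix_vector_mult_def adj_def
  by (simp add: sum_distrib_left sum_distrib_right mult_ac, rule sum.swap)

lemma Wcomb_diff: "Wcomb H v x y - Wcomb H v x' y' = Wcomb H v (x - x') (y - y')"
  by (simp add: Wcomb_def cscale_def vec_eq_iff algebra_simps)

text \<open>The retraction for U = 1 and atan2 y x = -pi/2, i.e. a1 = 0, a2 = -pi, b2 = \<theta>.\<close>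

definition Rcore :: "'n::finite cmat \<Rightarrow> complex ^'n \<Rightarrow> real \<Rightarrow> 'n cmat" where
  "Rcore H v \<theta> = mexp (cscale (- \<i> * \<theta>) (ket_bra v)) ** mexp (cscale (- \<i> * pi) H)
     ** mexp (cscale (\<i> * \<theta>) (ket_bra v)) ** mexp (cscale (\<i> * pi) H)"

locale projector_state =
  fixes H :: "'n::finite cmat" and v :: "complex ^'n"
  assumes orth_proj: "orth_proj H" and unit_vec: "unit_vec v"
begin

abbreviation comb where "comb \<equiv> hp_comb H (ket_bra v)"

definition weight :: real where
  "weight = (\<Sum>i\<in>UNIV. (cmod ((H *v v) $ i))\<^sup>2)"

lemma H_idem: "H ** H = H"
  using orth_proj by (simp add: orth_proj_def)

lemma adj_H: "adj H = H"
  using orth_proj by (simp add: orth_proj_def)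

lemma H_entry_cnj: "cnj (H $ j $ i) = H $ i $ j"
  using arg_cong[OF adj_H, of "\<lambda>M. M $ i $ j"] by (simp add: adj_def)

lemma cinner_v_v: "cinner v v = 1"
proof -
  have "complex_of_real (\<Sum>i\<in>UNIV. (cmod (v $ i))\<^sup>2) = 1"
    using unit_vec by (simp add: unit_vec_def)
  then show ?thesis
    unfolding cinner_def by (simp add: cmod_sq_eq_mult_cnj)
qed

lemma cinner_Hv_Hv: "cinner (H *v v) (H *v v) = weight"
  unfolding cinner_def weight_def by (simp add: cmod_sq_eq_mult_cnj)

lemma cinner_v_Hv: "cinner v (H *v v) = weight"
proof -
  have "cinner v (H *v v) = cinner v (H *v (H *v v))"
    by (simp add: matrix_vector_mul_assoc H_idem)
  also have "\<dots> = cinner (H *v v) (H *v v)"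
    by (simp add: cinner_mult_left adj_H)
  finally show ?thesis
    by (simp add: cinner_Hv_Hv)
qed

lemma P_idem: "ket_bra v ** ket_bra v = ket_bra v"
proof -
  have "(\<Sum>k\<in>UNIV. v $ i * cnj (v $ k) * (v $ k * cnj (v $ j))) = v $ i * cnj (v $ j) * cinner v v"
    for i j
    unfolding cinner_def by (simp add: sum_distrib_left mult_ac)
  then show ?thesis
    by (simp add: vec_eq_iff matrix_matrix_mult_def ket_bra_def cinner_v_v)
qed

lemma HP_entry: "(H ** ket_bra v) $ i $ j = (H *v v) $ i * cnj (v $ j)"
  unfolding ket_bra_def matrix_matrix_mult_def matrix_vector_mult_def
  by (simp add: sum_distrib_right sum_distrib_left mult_ac)

lemma PH_entry: "(ket_bra v ** H) $ i $ j = v $ i * cnj ((H *v v) $ j)"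
  unfolding ket_bra_def matrix_matrix_mult_def matrix_vector_mult_def
  by (simp add: sum_distrib_left H_entry_cnj mult_ac)

lemma HPH_entry: "(H ** ket_bra v ** H) $ i $ j = (H *v v) $ i * cnj ((H *v v) $ j)"
proof -
  have "(H ** ket_bra v ** H) $ i $ j = (\<Sum>k\<in>UNIV. (H *v v) $ i * cnj (v $ k) * H $ k $ j)"
    by (simp add: matrix_matrix_mult_def[of "H ** ket_bra v"] HP_entry)
  also have "\<dots> = (H *v v) $ i * cnj ((H *v v) $ j)"
    unfolding matrix_vector_mult_def by (simp add: sum_distrib_left H_entry_cnj mult_ac)
  finally show ?thesis .
qed

lemma PHP: "ket_bra v ** H ** ket_bra v = cscale weight (ket_bra v)"
proof -
  have "(\<Sum>k\<in>UNIV. v $ i * cnj ((H *v v) $ k) * (v $ k * cnj (v $ j)))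
      = v $ i * cnj (v $ j) * cinner v (H *v v)" for i j
    unfolding cinner_def by (simp add: sum_distrib_left mult_ac)
  then show ?thesis
    by (simp add: vec_eq_iff matrix_matrix_mult_def[of "ket_bra v ** H"] PH_entry cscale_def
        cinner_v_Hv ket_bra_entry mult_ac)
qed

lemmas comb_mult = hp_comb_mult[OF H_idem P_idem PHP]

lemma frob_comb:
  "(frob (comb 0 0 c1 c2 c3 c4))\<^sup>2 = weight\<^sup>2 * (cmod (c1 + c2 + c3 + c4))\<^sup>2
    + weight * (1 - weight) * ((cmod (c1 + c2))\<^sup>2 + (cmod (c1 + c3))\<^sup>2) + (1 - weight)\<^sup>2 * (cmod c1)\<^sup>2"
proof -
  have "comb 0 0 c1 c2 c3 c4 = (\<chi> i j. c1 * v $ i * cnj (v $ j) + c2 * (H *v v) $ i * cnj (v $ j)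
      + c3 * v $ i * cnj ((H *v v) $ j) + c4 * (H *v v) $ i * cnj ((H *v v) $ j))"
    by (simp add: hp_comb_def cscale_def vec_eq_iff HP_entry PH_entry HPH_entry ket_bra_entry mult_ac)
  then show ?thesis
    using frob_sq_outer_comb[OF cinner_v_v cinner_v_Hv cinner_Hv_Hv] by simp
qed

lemma mexp_H: "mexp (cscale c H) = comb 1 (exp c - 1) 0 0 0 0"
  by (simp add: mexp_cscale_idem[OF H_idem] hp_comb_def)

lemma mexp_P: "mexp (cscale c (ket_bra v)) = comb 1 0 (exp c - 1) 0 0 0"
  by (simp add: mexp_cscale_idem[OF P_idem] hp_comb_def)

lemma mat_1_comb: "mat 1 = comb 1 0 0 0 0 0"
  by (simp add: hp_comb_def)

lemma Wcomb_comb: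
  "Wcomb H v x y = comb 0 0 0 (x + \<i> * y) (- x + \<i> * y) (- 2 * \<i> * y)"
proof -
  have "H ** (H ** ket_bra v) = H ** ket_bra v" "ket_bra v ** H ** H = ket_bra v ** H"
    by (metis matrix_mul_assoc H_idem)+
  then have comm_H_X0:
      "comm H (X0 H v) = H ** ket_bra v + ket_bra v ** H - (H ** ket_bra v ** H + H ** ket_bra v ** H)"
    unfolding X0_def comm_def
    by (simp add: matrix_diff_ldistrib matrix_diff_rdistrib matrix_mul_assoc H_idem)
  show ?thesis
    unfolding Wcomb_def Y0_def comm_H_X0
    by (simp add: X0_def comm_def hp_comb_def cscale_def vec_eq_iff algebra_simps)
qed

lemma frob_X0_sq: "(frob (X0 H v))\<^sup>2 = 2 * weight * (1 - weight)"
proof -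
  have "X0 H v = comb 0 0 0 1 (- 1) 0"
    using Wcomb_comb[of 1 0] by (simp add: Wcomb_def)
  then show ?thesis
    by (simp only: frob_comb) (simp add: algebra_simps)
qed

lemma frob_Wcomb: "frob (Wcomb H v x y) = frob (X0 H v) * sqrt (x\<^sup>2 + y\<^sup>2)"
proof -
  have "(frob (Wcomb H v x y))\<^sup>2 = (frob (X0 H v))\<^sup>2 * (x\<^sup>2 + y\<^sup>2)"
    unfolding Wcomb_comb frob_comb frob_X0_sq by (simp add: cmod_power2 algebra_simps)
  then show ?thesis
    by (metis frob_eq_norm norm_ge_zero real_sqrt_mult real_sqrt_unique)
qed

lemma Wcomb_rotate:
  "mexp (cscale (\<i> * \<phi>) H) ** Wcomb H v x y ** mexp (cscale (- \<i> * \<phi>) H)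
    = Wcomb H v (x * cos \<phi> - y * sin \<phi>) (x * sin \<phi> + y * cos \<phi>)"
proof -
  have exp_i\<phi>: "exp (\<i> * complex_of_real \<phi>) = Complex (cos \<phi>) (sin \<phi>)"
    "exp (- \<i> * complex_of_real \<phi>) = Complex (cos \<phi>) (- sin \<phi>)"
    using cis_conv_exp[of \<phi>] cis_conv_exp[of "- \<phi>"] by (simp_all add: complex_eq_iff)
  show ?thesis
    unfolding mexp_H Wcomb_comb comb_mult exp_i\<phi>
    by (rule hp_comb_cong) (simp_all add: complex_eq_iff algebra_simps)
qed

lemma Rxy_conj_Rcore:
  "\<exists>E. unitary E
     \<and> Rxy H v U x y = E ** Rcore H v (sqrt (x\<^sup>2 + y\<^sup>2) / 2) ** adj E ** U
     \<and> Wcomb H v x y = E ** Wcomb H v 0 (- sqrt (x\<^sup>2 + y\<^sup>2)) ** adj E"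
proof (intro exI conjI)
  define A R where "A = atan2 y x" and "R = sqrt (x\<^sup>2 + y\<^sup>2)"
  define E where "E = mexp (cscale (\<i> * complex_of_real (A + pi / 2)) H)"
  show "unitary E"
    unfolding E_def by (rule unitary_mexp_imag[OF orth_proj])
  have adj_E: "adj E = mexp (cscale (- \<i> * complex_of_real (A + pi / 2)) H)"
    unfolding E_def adj_mexp_cscale[OF orth_proj] by simp
  have last_factor: "mexp (cscale (- \<i> * complex_of_real (A - pi / 2)) H)
      = mexp (cscale (\<i> * pi) H) ** adj E"
    unfolding adj_E mexp_cscale_idem_add[OF H_idem] by (simp add: algebra_simps)
  have "Rxy H v U x y = E ** mexp (cscale (- \<i> * complex_of_real (R / 2)) (ket_bra v))
      ** mexp (cscale (- \<i> * pi) H) ** mexp (cscale (\<i> * complex_of_real (R / 2)) (ket_bra v))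
      ** (mexp (cscale (\<i> * pi) H) ** adj E) ** U"
    unfolding Rxy_def Let_def A_def[symmetric] R_def[symmetric] E_def[symmetric]
      last_factor[symmetric]
    by (simp add: algebra_simps)
  then show "Rxy H v U x y = E ** Rcore H v (sqrt (x\<^sup>2 + y\<^sup>2) / 2) ** adj E ** U"
    by (simp add: Rcore_def R_def matrix_mul_assoc)
  have "E ** Wcomb H v 0 (- R) ** adj E = Wcomb H v (R * cos A) (R * sin A)"
    unfolding adj_E unfolding E_def Wcomb_rotate by (simp add: sin_add cos_add)
  also have "\<dots> = Wcomb H v x y"
    unfolding A_def R_def polar_atan2[symmetric] ..
  finally show "Wcomb H v x y = E ** Wcomb H v 0 (- sqrt (x\<^sup>2 + y\<^sup>2)) ** adj E"
    by (simp add: R_def)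
qed

definition core_err :: "real \<Rightarrow> real \<Rightarrow> 'n cmat" where
  "core_err \<gamma> \<delta> = comb 0 0 (- 4 * weight * \<gamma>) (2 * \<gamma> - 2 * \<i> * \<delta>)
     (2 * \<gamma> - 2 * \<i> * \<delta> - 4 * \<gamma> * (1 - 2 * weight)) (- 4 * \<gamma> + 4 * \<i> * \<delta>)"

lemma frob_core_err: "frob (core_err \<gamma> \<delta>) = 2 * frob (X0 H v) * sqrt (\<gamma>\<^sup>2 + \<delta>\<^sup>2)"
proof -
  have "- 4 * weight * \<gamma> + (2 * \<gamma> - 2 * \<i> * \<delta>) + (2 * \<gamma> - 2 * \<i> * \<delta> - 4 * \<gamma> * (1 - 2 * weight))
      + (- 4 * \<gamma> + 4 * \<i> * \<delta>) = complex_of_real (- 4 * \<gamma> * (1 - weight))"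
    "- 4 * weight * \<gamma> + (2 * \<gamma> - 2 * \<i> * \<delta>) = Complex (2 * \<gamma> * (1 - 2 * weight)) (- 2 * \<delta>)"
    "- 4 * weight * \<gamma> + (2 * \<gamma> - 2 * \<i> * \<delta> - 4 * \<gamma> * (1 - 2 * weight))
      = Complex (- 2 * \<gamma> * (1 - 2 * weight)) (- 2 * \<delta>)"
    "- 4 * weight * \<gamma> = complex_of_real (- 4 * weight * \<gamma>)"
    by (simp_all add: complex_eq_iff algebra_simps)
  then have "(frob (core_err \<gamma> \<delta>))\<^sup>2 = 8 * weight * (1 - weight) * (\<gamma>\<^sup>2 + \<delta>\<^sup>2)"
    unfolding core_err_def frob_comb
    by (simp only: norm_of_real power2_abs cmod_power2 Re_complex_of_real Im_complex_of_real
        complex.sel) (simp add: power2_eq_square algebra_simps)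
  also have "\<dots> = (2 * frob (X0 H v) * sqrt (\<gamma>\<^sup>2 + \<delta>\<^sup>2))\<^sup>2"
    by (simp add: power_mult_distrib frob_X0_sq)
  finally show ?thesis
    by (rule power2_eq_imp_eq) (simp_all add: frob_eq_norm)
qed

lemma Rcore_comb:
  fixes \<theta> :: real
  defines "p \<equiv> exp (- \<i> * complex_of_real \<theta>) - 1" and "q \<equiv> exp (\<i> * complex_of_real \<theta>) - 1"
  shows "Rcore H v \<theta> = comb 1 0 (p + q + p * q * (1 - 2 * weight)) (- 2 * q)
    (- 2 * q - 2 * (p * q) * (1 - 2 * weight)) (4 * q)"
proof -
  have exp_pi: "exp (\<i> * complex_of_real pi) = - 1" "exp (- \<i> * complex_of_real pi) = - 1"
    by (simp_all add: exp_minus)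
  have "Rcore H v \<theta> = comb 1 0 p 0 0 0 ** comb 1 (- 2) 0 0 0 0 ** comb 1 0 q 0 0 0
      ** comb 1 (- 2) 0 0 0 0"
    unfolding Rcore_def mexp_H mexp_P exp_pi p_def q_def by simp
  also have "\<dots> = comb 1 0 (p + q + p * q * (1 - 2 * weight)) (- 2 * q)
      (- 2 * q - 2 * (p * q) * (1 - 2 * weight)) (4 * q)"
    unfolding comb_mult by (rule hp_comb_cong) (simp_all add: algebra_simps)
  finally show ?thesis .
qed

lemma Rcore_errors:
  "Rcore H v \<theta> - mat 1 = core_err (1 - cos \<theta>) (sin \<theta>)"
  "Rcore H v \<theta> - mat 1 - Wcomb H v 0 (- 2 * \<theta>) = core_err (1 - cos \<theta>) (sin \<theta> - \<theta>)"
proof -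
  define p q where "p = exp (- \<i> * complex_of_real \<theta>) - 1" and "q = exp (\<i> * complex_of_real \<theta>) - 1"
  have p: "p = Complex (cos \<theta> - 1) (- sin \<theta>)" and q: "q = Complex (cos \<theta> - 1) (sin \<theta>)"
    using cis_conv_exp[of \<theta>] cis_conv_exp[of "- \<theta>"] by (simp_all add: p_def q_def complex_eq_iff)
  have sin_sq: "sin \<theta> * sin \<theta> = 1 - cos \<theta> * cos \<theta>"
    using sin_squared_eq[of \<theta>] by (simp add: power2_eq_square)
  have p_plus_q: "p + q = 2 * complex_of_real (cos \<theta>) - 2"
    and p_times_q: "p * q = 2 - 2 * complex_of_real (cos \<theta>)"
    and q_eq: "q = complex_of_real (cos \<theta>) - 1 + \<i> * complex_of_real (sin \<theta>)"
    unfolding p q by (simp_all add: complex_eq_iff algebra_simps sin_sq)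
  have Rcore: "Rcore H v \<theta> = comb 1 0 (2 * complex_of_real (cos \<theta>) - 2
      + (2 - 2 * complex_of_real (cos \<theta>)) * (1 - 2 * weight)) (- 2 * q)
      (- 2 * q - 2 * (2 - 2 * complex_of_real (cos \<theta>)) * (1 - 2 * weight)) (4 * q)"
    using Rcore_comb[of \<theta>] unfolding p_def[symmetric] q_def[symmetric] p_plus_q p_times_q .
  show "Rcore H v \<theta> - mat 1 = core_err (1 - cos \<theta>) (sin \<theta>)"
    unfolding Rcore q_eq mat_1_comb hp_comb_diff core_err_def
    by (rule hp_comb_cong) (simp_all add: algebra_simps)
  show "Rcore H v \<theta> - mat 1 - Wcomb H v 0 (- 2 * \<theta>) = core_err (1 - cos \<theta>) (sin \<theta> - \<theta>)"
    unfolding Rcore q_eq mat_1_comb Wcomb_comb hp_comb_diff core_err_def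
    by (rule hp_comb_cong) (simp_all add: algebra_simps)
qed

end

locale nondegenerate_projector_state = projector_state +
  assumes X0_pos: "frob (X0 H v) > 0"
begin

lemma Wcomb_mult_unitary_inj:
  assumes U: "unitary U" and eq: "Wcomb H v x y ** U = Wcomb H v x' y' ** U"
  shows "x = x' \<and> y = y'"
proof -
  have "frob (X0 H v) * sqrt ((x - x')\<^sup>2 + (y - y')\<^sup>2) = frob ((Wcomb H v x y - Wcomb H v x' y') ** U)"
    by (simp add: frob_mult_unitary_right[OF U] Wcomb_diff frob_Wcomb)
  also have "\<dots> = 0"
    by (simp add: matrix_diff_rdistrib eq frob_eq_norm)
  finally have "(x - x')\<^sup>2 + (y - y')\<^sup>2 = 0"
    using X0_pos by simp
  then show ?thesis
    by simp
qed

lemma Rret_Wcomb: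
  assumes "unitary U"
  shows "Rret H v U (Wcomb H v x y ** U) = Rxy H v U x y"
proof -
  have "(THE (x', y'). Wcomb H v x y ** U = Wcomb H v x' y' ** U) = (x, y)"
    by (rule the_equality) (auto dest: Wcomb_mult_unitary_inj[OF assms])
  then show ?thesis
    unfolding Rret_def by simp
qed

lemma frob_Rret_errors:
  assumes U: "unitary U" and \<eta>: "\<eta> \<in> WU H v U"
  defines "\<theta> \<equiv> frob \<eta> / (2 * frob (X0 H v))"
  shows "frob (Rret H v U \<eta> - U) = 2 * frob (X0 H v) * cmod (iexp \<theta> - 1)"
    and "frob (Rret H v U \<eta> - U - \<eta>) = 2 * frob (X0 H v) * cmod (iexp \<theta> - 1 - \<i> * \<theta>)"
proof -
  obtain x y where \<eta>_eq: "\<eta> = Wcomb H v x y ** U"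
    using \<eta> by (auto simp: WU_def)
  obtain E where E: "unitary E"
    and R: "Rxy H v U x y = E ** Rcore H v (sqrt (x\<^sup>2 + y\<^sup>2) / 2) ** adj E ** U"
    and W: "Wcomb H v x y = E ** Wcomb H v 0 (- sqrt (x\<^sup>2 + y\<^sup>2)) ** adj E"
    using Rxy_conj_Rcore by blast
  have \<theta>_eq: "sqrt (x\<^sup>2 + y\<^sup>2) = 2 * \<theta>"
    using X0_pos by (simp add: \<theta>_def \<eta>_eq frob_mult_unitary_right[OF U] frob_Wcomb)
  have E_adj: "E ** adj E = mat 1"
    using E by (simp add: unitary_def)
  have frob_conj: "frob (E ** M ** adj E ** U) = frob M" for M
    using E U by (simp add: frob_mult_unitary_right frob_mult_unitary_left unitary_adj)
  have Rret_conj: "Rret H v U \<eta> = E ** Rcore H v \<theta> ** adj E ** U"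
    by (simp add: \<eta>_eq Rret_Wcomb[OF U] R \<theta>_eq)
  have "Rret H v U \<eta> - U = E ** (Rcore H v \<theta> - mat 1) ** adj E ** U"
    unfolding Rret_conj by (simp add: matrix_diff_ldistrib matrix_diff_rdistrib E_adj)
  then show "frob (Rret H v U \<eta> - U) = 2 * frob (X0 H v) * cmod (iexp \<theta> - 1)"
    by (simp add: frob_conj Rcore_errors frob_core_err iexp_sub_1 complex_norm power2_commute)
  have "Rret H v U \<eta> - U - \<eta> = E ** (Rcore H v \<theta> - mat 1 - Wcomb H v 0 (- 2 * \<theta>)) ** adj E ** U"
    unfolding Rret_conj unfolding \<eta>_eq W \<theta>_eq
    by (simp add: matrix_diff_ldistrib matrix_diff_rdistrib E_adj)
  then show "frob (Rret H v U \<eta> - U - \<eta>) = 2 * frob (X0 H v) * cmod (iexp \<theta> - 1 - \<i> * \<theta>)"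
    by (simp only: frob_conj Rcore_errors(2) frob_core_err)
      (simp add: iexp_sub_1_sub_linear complex_norm power2_commute)
qed

lemma frob_Rret_bounds:
  assumes "unitary U" and "\<eta> \<in> WU H v U"
  shows "frob (Rret H v U \<eta> - U) \<le> frob \<eta>"
    and "frob (Rret H v U \<eta> - U - \<eta>) \<le> (frob \<eta>)\<^sup>2 / (4 * frob (X0 H v))"
proof -
  define c0 \<theta> where "c0 = frob (X0 H v)" and "\<theta> = frob \<eta> / (2 * frob (X0 H v))"
  have c0: "c0 > 0" and \<eta>_eq: "frob \<eta> = 2 * c0 * \<theta>" and "\<theta> \<ge> 0"
    using X0_pos by (simp_all add: c0_def \<theta>_def frob_eq_norm)
  then have "2 * c0 * cmod (iexp \<theta> - 1) \<le> 2 * c0 * \<theta>"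
    and "2 * c0 * cmod (iexp \<theta> - 1 - \<i> * \<theta>) \<le> 2 * c0 * (\<theta>\<^sup>2 / 2)"
    using norm_iexp_sub_1_le[of \<theta>] norm_iexp_sub_1_sub_linear_le[of \<theta>] by simp_all
  then show "frob (Rret H v U \<eta> - U) \<le> frob \<eta>"
    and "frob (Rret H v U \<eta> - U - \<eta>) \<le> (frob \<eta>)\<^sup>2 / (4 * frob (X0 H v))"
    using c0 unfolding frob_Rret_errors[OF assms] \<eta>_eq c0_def[symmetric] \<theta>_def[symmetric]
    by (simp_all add: power2_eq_square field_simps)
qed

lemma tendsto_Rret_ratios:
  assumes U: "unitary U"
  shows "((\<lambda>\<eta>. frob (Rret H v U \<eta> - U) / frob \<eta>) \<longlongrightarrow> 1) (at 0 within WU H v U)"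
    and "((\<lambda>\<eta>. frob (Rret H v U \<eta> - U - \<eta>) / (frob \<eta>)\<^sup>2) \<longlongrightarrow> 1 / (4 * frob (X0 H v)))
      (at 0 within WU H v U)"
proof -
  define c0 where "c0 = frob (X0 H v)"
  have c0: "c0 > 0"
    using X0_pos by (simp add: c0_def)
  have \<theta>_lim: "filterlim (\<lambda>\<eta>. frob \<eta> / (2 * c0)) (at_right 0) (at 0 within WU H v U)"
    using filterlim_norm_div_at_right_0[of "2 * c0"] c0 by (simp add: frob_eq_norm)
  have in_WU: "\<forall>\<^sub>F \<eta> in at 0 within WU H v U. \<eta> \<in> WU H v U"
    by (simp add: eventually_at_filter)
  txt \<open>These identities hold on all of WU, at \<eta> = 0 too, because both sides are junk 0/0 = 0.\<close>
  have "\<forall>\<^sub>F \<eta> in at 0 within WU H v U. frob (Rret H v U \<eta> - U) / frob \<eta>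
      = cmod (iexp (frob \<eta> / (2 * c0)) - 1) / (frob \<eta> / (2 * c0))"
    using in_WU by eventually_elim (use frob_Rret_errors[OF U] c0 in \<open>simp add: c0_def\<close>)
  then show "((\<lambda>\<eta>. frob (Rret H v U \<eta> - U) / frob \<eta>) \<longlongrightarrow> 1) (at 0 within WU H v U)"
    using filterlim_compose[OF tendsto_norm_iexp_sub_1_div \<theta>_lim] by (rule tendsto_cong[THEN iffD2])
  have "\<forall>\<^sub>F \<eta> in at 0 within WU H v U. frob (Rret H v U \<eta> - U - \<eta>) / (frob \<eta>)\<^sup>2
      = cmod (iexp (frob \<eta> / (2 * c0)) - 1 - \<i> * (frob \<eta> / (2 * c0))) / (frob \<eta> / (2 * c0))\<^sup>2
        / (2 * c0)"
    using in_WU by eventually_elim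
      (use frob_Rret_errors[OF U] c0 in \<open>simp add: c0_def power2_eq_square field_simps\<close>)
  moreover have "((\<lambda>t. cmod (iexp t - 1 - \<i> * t) / t\<^sup>2 / (2 * c0)) \<longlongrightarrow> 1 / 2 / (2 * c0)) (at_right 0)"
    by (intro tendsto_divide tendsto_const tendsto_norm_iexp_sub_1_sub_linear_div) (use c0 in simp)
  ultimately show "((\<lambda>\<eta>. frob (Rret H v U \<eta> - U - \<eta>) / (frob \<eta>)\<^sup>2) \<longlongrightarrow> 1 / (4 * frob (X0 H v)))
      (at 0 within WU H v U)"
    using filterlim_compose[OF _ \<theta>_lim] tendsto_cong by (fastforce simp: c0_def)
qed

end

theorem theorem5p5:
  fixes H :: "complex ^'n::finite ^'n" and v :: "complex ^'n"
  assumes "orth_proj H" and "unit_vec v" and "frob (X0 H v) > 0"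
  shows "(\<forall>U \<eta>. unitary U \<and> \<eta> \<in> WU H v U \<longrightarrow>
            frob (Rret H v U \<eta> - U) \<le> frob \<eta> \<and>
            frob (Rret H v U \<eta> - U - \<eta>) \<le> (frob \<eta>)\<^sup>2 / (4 * frob (X0 H v)))
       \<and> (\<forall>U. unitary U \<longrightarrow>
            ((\<lambda>\<eta>. frob (Rret H v U \<eta> - U) / frob \<eta>) \<longlongrightarrow> 1) (at 0 within WU H v U)
          \<and> ((\<lambda>\<eta>. frob (Rret H v U \<eta> - U - \<eta>) / (frob \<eta>)\<^sup>2) \<longlongrightarrow> 1 / (4 * frob (X0 H v)))
               (at 0 within WU H v U))"
proof -
  interpret nondegenerate_projector_state H v
    by unfold_locales (fact assms)+
  show ?thesis
    using frob_Rret_bounds tendsto_Rret_ratios by blast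
qed

end
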